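(* Let $G$ be a simple connected bipartite graph on $n$ vertices with maximum degree $\Delta$, and let $S=\sum_{j=1}^{n}D_j$. Suppose that $\deg(v_1)=\deg(v_2)=\cdots=\deg(v_k)=\Delta\le n-2$ for some $k$ with $1\le k\le n$. Then $$S_{\mathcal{D}}(G)\ \ge\ \max_{1\le i\le k}\frac{\sqrt{a_i^{2}+4b_i(1+\Delta)(n-\Delta-1)}}{(1+\Delta)(n-\Delta-1)},$$ where $a_i=(\Delta+1)(S-2D_i-2t_{v_i}\Delta)+2n\Delta^{2}$ and $b_i=D_i^{2}-2S\Delta^{2}+2D_it_{v_i}\Delta+t_{v_i}^{2}\Delta^{2}$.
   Context: $G$ has vertex set $\{v_1,\dots,v_n\}$; $d_G(u,v)$ denotes the distance in $G$. The distance matrix is $\mathcal{D}(G)=(d_G(v_i,v_j))_{n\times n}$. The transmission (distance degree) of $v_i$ is $D_i=\sum_{j\ne i}d_G(v_i,v_j)$, the $i$-th row sum of $\mathcal{D}(G)$. For a vertex $v$ of degree $d_v$, $t_v=\frac{1}{d_v}\sum_{v_j\sim v}D_j$ is the average distance degree of the neighbours of $v$. Let $\rho^{\mathcal{D}}(G)$ and $\rho^{\mathcal{D}}_{min}(G)$ be the largest and least eigenvalues of $\mathcal{D}(G)$; the distance spread is $S_{\mathcal{D}}(G)=\rho^{\mathcal{D}}(G)-\rho^{\mathcal{D}}_{min}(G)$. *)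

theory Defs
  imports "HOL-Analysis.Analysis"
begin

text \<open>Simple graphs on a finite vertex type: adjacency relation E, symmetric and irreflexive.
  Vertex set = UNIV :: 'a set, so n = CARD('a).\<close>

definition simple_graph :: "('a \<Rightarrow> 'a \<Rightarrow> bool) \<Rightarrow> bool" where
  "simple_graph E \<longleftrightarrow> (\<forall>u v. E u v \<longrightarrow> E v u) \<and> (\<forall>v. \<not> E v v)"

definition connected_graph :: "('a \<Rightarrow> 'a \<Rightarrow> bool) \<Rightarrow> bool" where
  "connected_graph E \<longleftrightarrow> (\<forall>u v. \<exists>k. (E ^^ k) u v)"

definition bipartite_graph :: "('a \<Rightarrow> 'a \<Rightarrow> bool) \<Rightarrow> bool" where
  "bipartite_graph E \<longleftrightarrow> (\<exists>c :: 'a \<Rightarrow> bool. \<forall>u v. E u v \<longrightarrow> c u \<noteq> c v)"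

definition gdist :: "('a \<Rightarrow> 'a \<Rightarrow> bool) \<Rightarrow> 'a \<Rightarrow> 'a \<Rightarrow> nat" where
  "gdist E u v = (LEAST k. (E ^^ k) u v)"

definition gdeg :: "('a \<Rightarrow> 'a \<Rightarrow> bool) \<Rightarrow> 'a \<Rightarrow> nat" where
  "gdeg E v = card {w. E v w}"

definition max_deg :: "('a::finite \<Rightarrow> 'a \<Rightarrow> bool) \<Rightarrow> nat" where
  "max_deg E = Max (range (gdeg E))"

definition transmission :: "('a::finite \<Rightarrow> 'a \<Rightarrow> bool) \<Rightarrow> 'a \<Rightarrow> real" where
  "transmission E v = (\<Sum>u\<in>UNIV. real (gdist E v u))"

definition avg_nbr_trans :: "('a::finite \<Rightarrow> 'a \<Rightarrow> bool) \<Rightarrow> 'a \<Rightarrow> real" where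
  "avg_nbr_trans E v = (\<Sum>w\<in>{w. E v w}. transmission E w) / real (gdeg E v)"

definition dist_matrix :: "('a::finite \<Rightarrow> 'a \<Rightarrow> bool) \<Rightarrow> real^'a^'a" where
  "dist_matrix E = (\<chi> i j. real (gdist E i j))"

definition is_eigenvalue :: "real^'n^'n \<Rightarrow> real \<Rightarrow> bool" where
  "is_eigenvalue A l \<longleftrightarrow> (\<exists>x. x \<noteq> 0 \<and> A *v x = l *\<^sub>R x)"

definition largest_eig :: "real^'n^'n \<Rightarrow> real" where
  "largest_eig A = Max {l. is_eigenvalue A l}"

definition least_eig :: "real^'n^'n \<Rightarrow> real" where
  "least_eig A = Min {l. is_eigenvalue A l}"

definition distance_spread :: "('a::finite \<Rightarrow> 'a \<Rightarrow> bool) \<Rightarrow> real" where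
  "distance_spread E = largest_eig (dist_matrix E) - least_eig (dist_matrix E)"

end

theory Submission
  imports Defs
begin

text \<open>
  For a symmetric matrix every Rayleigh quotient lies between the least and the largest eigenvalue.
  Rotating an orthonormal pair \<open>u, w\<close> by an angle \<open>\<theta>\<close> produces orthonormal \<open>x, y\<close> whose
  Rayleigh quotients differ by \<open>(p - q) cos 2\<theta> + 2r sin 2\<theta>\<close>, where \<open>p, q, r\<close> are the entries of the
  compressed \<open>2 \<times> 2\<close> matrix; optimising over \<open>\<theta>\<close> bounds the spread below by
  \<open>sqrt ((p - q)\<^sup>2 + 4 r\<^sup>2)\<close>.

  For a vertex \<open>v\<close> of degree \<open>\<Delta>\<close> take \<open>u, w\<close> to be the normalised indicator vectors of the closed
  neighbourhood \<open>X\<close> of \<open>v\<close> and of its complement. In a bipartite graph two neighbours of \<open>v\<close> are at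
  distance 2, so the distances inside \<open>X\<close> sum to \<open>2\<Delta>\<^sup>2\<close>; the row sums over \<open>X\<close> give
  \<open>D\<^sub>v + \<Delta> t\<^sub>v\<close>, and the remaining block sums are expressed through \<open>S\<close>.
\<close>

lemma symmetric_matrix_inner:
  fixes A :: "real^'n^'n"
  assumes "transpose A = A"
  shows "(A *v x) \<bullet> y = x \<bullet> (A *v y)"
  by (metis assms dot_lmul_matrix inner_commute vector_transpose_matrix)

lemma eigenvalues_finite:
  fixes A :: "real^'n^'n"
  assumes "transpose A = A"
  shows "finite {l. is_eigenvalue A l}"
proof -
  let ?L = "{l. is_eigenvalue A l}"
  define ev where "ev l = (SOME x. x \<noteq> 0 \<and> A *v x = l *\<^sub>R x)" for l
  have ev: "ev l \<noteq> 0 \<and> A *v ev l = l *\<^sub>R ev l" if "l \<in> ?L" for l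
    using that unfolding ev_def is_eigenvalue_def by (metis (mono_tags, lifting) mem_Collect_eq someI_ex)
  have "inj_on ev ?L"
  proof (rule inj_onI)
    fix l1 l2 assume "l1 \<in> ?L" "l2 \<in> ?L" "ev l1 = ev l2"
    then have "l1 *\<^sub>R ev l1 = l2 *\<^sub>R ev l1" "ev l1 \<noteq> 0" using ev by metis+
    then show "l1 = l2" by (simp add: scaleR_cancel_right)
  qed
  moreover have "pairwise orthogonal (ev ` ?L)"
  proof (clarsimp simp: pairwise_def)
    fix l1 l2 assume l: "is_eigenvalue A l1" "is_eigenvalue A l2" "ev l1 \<noteq> ev l2"
    have "l1 * (ev l1 \<bullet> ev l2) = l2 * (ev l1 \<bullet> ev l2)"
      using symmetric_matrix_inner[OF assms, of "ev l1" "ev l2"] ev l by simp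
    moreover have "l1 \<noteq> l2" using l by auto
    ultimately show "orthogonal (ev l1) (ev l2)" by (simp add: orthogonal_def)
  qed
  moreover have "0 \<notin> ev ` ?L" using ev by auto
  ultimately show ?thesis
    by (metis finite_imageD independent_bound pairwise_orthogonal_independent)
qed

lemma rayleigh_max_imp_eigenvector:
  fixes A :: "real^'n^'n"
  assumes sym: "transpose A = A"
    and le: "\<And>x. x \<bullet> (A *v x) \<le> \<mu> * (x \<bullet> x)"
    and eq: "x0 \<bullet> (A *v x0) = \<mu> * (x0 \<bullet> x0)"
  shows "A *v x0 = \<mu> *\<^sub>R x0"
proof (rule ccontr)
  define g where "g x = \<mu> * (x \<bullet> x) - x \<bullet> (A *v x)" for x
  define z where "z = \<mu> *\<^sub>R x0 - A *v x0"
  assume "A *v x0 \<noteq> \<mu> *\<^sub>R x0"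
  then have zz: "z \<bullet> z > 0" by (simp add: z_def)
  have gz: "g z \<ge> 0" using le[of z] by (simp add: g_def)
  have expand: "g (x0 + t *\<^sub>R z) = t * (2 * (z \<bullet> z) + t * g z)" for t
  proof -
    have "x0 \<bullet> (A *v z) = z \<bullet> (A *v x0)"
      using symmetric_matrix_inner[OF sym, of z x0] by (simp add: inner_commute)
    then have form: "(x0 + t *\<^sub>R z) \<bullet> (A *v (x0 + t *\<^sub>R z))
        = x0 \<bullet> (A *v x0) + 2 * t * (z \<bullet> (A *v x0)) + t\<^sup>2 * (z \<bullet> (A *v z))"
      by (simp add: matrix_vector_right_distrib matrix_vector_mult_scaleR inner_add_left
          inner_add_right power2_eq_square)
        (simp add: distrib_left)
    have norm: "(x0 + t *\<^sub>R z) \<bullet> (x0 + t *\<^sub>R z) = x0 \<bullet> x0 + 2 * t * (x0 \<bullet> z) + t\<^sup>2 * (z \<bullet> z)"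
      by (simp add: inner_add_left inner_add_right inner_commute power2_eq_square)
    have "z \<bullet> z = z \<bullet> (\<mu> *\<^sub>R x0 - A *v x0)"
      by (subst (2) z_def) (rule refl)
    then have zz_eq: "z \<bullet> z = \<mu> * (x0 \<bullet> z) - z \<bullet> (A *v x0)"
      by (simp add: inner_diff_right inner_commute)
    have "g (x0 + t *\<^sub>R z) = \<mu> * (x0 \<bullet> x0 + 2 * t * (x0 \<bullet> z) + t\<^sup>2 * (z \<bullet> z))
        - (x0 \<bullet> (A *v x0) + 2 * t * (z \<bullet> (A *v x0)) + t\<^sup>2 * (z \<bullet> (A *v z)))"
      unfolding g_def form norm ..
    also have "\<dots> = t * (2 * (\<mu> * (x0 \<bullet> z) - z \<bullet> (A *v x0))) + t\<^sup>2 * g z"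
      using eq by (simp add: g_def algebra_simps)
    also have "\<dots> = t * (2 * (z \<bullet> z) + t * g z)"
      by (simp add: zz_eq power2_eq_square distrib_left)
    finally show ?thesis .
  qed
  txt \<open>Moving from the maximiser a little in the direction of \<open>z\<close> would make \<open>g\<close> negative.\<close>
  define t where "t = - (z \<bullet> z) / (g z + 1)"
  have t_neg: "t < 0" using zz gz by (simp add: t_def)
  have "g z / (g z + 1) < 1" using gz by simp
  then have "(z \<bullet> z) * (g z / (g z + 1)) < (z \<bullet> z) * 1"
    using zz by (rule mult_strict_left_mono)
  moreover have "t * g z = - ((z \<bullet> z) * (g z / (g z + 1)))" by (simp add: t_def)
  ultimately have "2 * (z \<bullet> z) + t * g z > 0" using zz by linarith
  then have "g (x0 + t *\<^sub>R z) < 0" unfolding expand using t_neg by (simp add: mult_neg_pos)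
  then show False using le[of "x0 + t *\<^sub>R z"] by (simp add: g_def)
qed

lemma rayleigh_le_eigenvalue:
  fixes A :: "real^'n^'n"
  assumes sym: "transpose A = A"
  obtains \<mu> where "is_eigenvalue A \<mu>" "\<And>x. x \<bullet> (A *v x) \<le> \<mu> * (x \<bullet> x)"
proof -
  let ?f = "\<lambda>x. x \<bullet> (A *v x)"
  have "axis i 1 \<in> sphere (0::real^'n) 1" for i by simp
  then have "sphere (0::real^'n) 1 \<noteq> {}" by blast
  moreover have "continuous_on (sphere 0 1) ?f" by (intro continuous_intros)
  ultimately obtain x0 where x0: "x0 \<in> sphere 0 1" and max: "\<And>y. y \<in> sphere 0 1 \<Longrightarrow> ?f y \<le> ?f x0"
    using continuous_attains_sup[OF compact_sphere] by blast
  have x0_unit: "x0 \<bullet> x0 = 1" using x0 by (simp add: dot_square_norm)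
  have le: "?f x \<le> ?f x0 * (x \<bullet> x)" for x
  proof (cases "x = 0")
    case False
    then have "?f ((1 / norm x) *\<^sub>R x) \<le> ?f x0" by (intro max) simp
    then show ?thesis
      using False by (simp add: matrix_vector_mult_scaleR dot_square_norm field_simps power2_eq_square)
  qed simp
  have "A *v x0 = ?f x0 *\<^sub>R x0"
    using rayleigh_max_imp_eigenvector[OF sym le] x0_unit by simp
  moreover have "x0 \<noteq> 0" using x0_unit by auto
  ultimately show thesis using that le unfolding is_eigenvalue_def by blast
qed

lemma rayleigh_le_largest_eig:
  fixes A :: "real^'n^'n"
  assumes sym: "transpose A = A"
  shows "x \<bullet> (A *v x) \<le> largest_eig A * (x \<bullet> x)"
proof -
  obtain \<mu> where "is_eigenvalue A \<mu>" and le: "x \<bullet> (A *v x) \<le> \<mu> * (x \<bullet> x)"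
    using rayleigh_le_eigenvalue[OF sym] by metis
  then have "\<mu> \<le> largest_eig A"
    unfolding largest_eig_def using eigenvalues_finite[OF sym] by (simp add: Max_ge)
  then show ?thesis using le by (meson inner_ge_zero mult_right_mono order_trans)
qed

lemma uminus_matrix_vector_mult: "(- A) *v x = - (A *v x :: real^'m)"
  by (simp add: matrix_vector_mult_def vec_eq_iff sum_negf)

lemma least_eig_le_rayleigh:
  fixes A :: "real^'n^'n"
  assumes sym: "transpose A = A"
  shows "least_eig A * (x \<bullet> x) \<le> x \<bullet> (A *v x)"
proof -
  have sym': "transpose (- A) = - A"
    using sym by (simp add: transpose_def vec_eq_iff)
  obtain \<mu> where ev: "is_eigenvalue (- A) \<mu>" and le: "x \<bullet> ((- A) *v x) \<le> \<mu> * (x \<bullet> x)"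
    using rayleigh_le_eigenvalue[OF sym'] by metis
  have "is_eigenvalue A (- \<mu>)"
    using ev unfolding is_eigenvalue_def uminus_matrix_vector_mult by (metis minus_equation_iff scaleR_minus_left)
  then have "least_eig A \<le> - \<mu>"
    unfolding least_eig_def using eigenvalues_finite[OF sym] by (simp add: Min_le)
  then have "least_eig A * (x \<bullet> x) \<le> - \<mu> * (x \<bullet> x)"
    using inner_ge_zero by (rule mult_right_mono)
  then show ?thesis
    using le unfolding uminus_matrix_vector_mult by simp
qed

lemma spread_ge_orthonormal_pair:
  fixes A :: "real^'n^'n"
  assumes sym: "transpose A = A"
    and uu: "u \<bullet> u = 1" and ww: "w \<bullet> w = 1" and uw: "u \<bullet> w = 0"
  shows "sqrt ((u \<bullet> (A *v u) - w \<bullet> (A *v w))\<^sup>2 + 4 * (u \<bullet> (A *v w))\<^sup>2)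
    \<le> largest_eig A - least_eig A"
proof -
  define a where "a = u \<bullet> (A *v u) - w \<bullet> (A *v w)"
  define b where "b = 2 * (u \<bullet> (A *v w))"
  have wAu: "w \<bullet> (A *v u) = u \<bullet> (A *v w)"
    using symmetric_matrix_inner[OF sym, of u w] by (simp add: inner_commute)
  have rotated: "a * cos (2 * \<theta>) + b * sin (2 * \<theta>) \<le> largest_eig A - least_eig A" for \<theta>
  proof -
    define x where "x = cos \<theta> *\<^sub>R u + sin \<theta> *\<^sub>R w"
    define y where "y = (- sin \<theta>) *\<^sub>R u + cos \<theta> *\<^sub>R w"
    have "x \<bullet> x = 1" "y \<bullet> y = 1"
      using uu ww uw by (simp_all add: x_def y_def inner_add_left inner_add_right inner_diff_left
          inner_diff_right inner_commute flip: power2_eq_square distrib_left)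
    then have "x \<bullet> (A *v x) - y \<bullet> (A *v y) \<le> largest_eig A - least_eig A"
      using rayleigh_le_largest_eig[OF sym, of x] least_eig_le_rayleigh[OF sym, of y] by simp
    moreover have "x \<bullet> (A *v x) - y \<bullet> (A *v y)
        = a * ((cos \<theta>)\<^sup>2 - (sin \<theta>)\<^sup>2) + b * (2 * sin \<theta> * cos \<theta>)"
      using wAu by (simp add: x_def y_def a_def b_def matrix_vector_right_distrib
          matrix_vector_mult_scaleR inner_add_left inner_add_right power2_eq_square algebra_simps)
    ultimately show ?thesis by (simp add: cos_double sin_double)
  qed
  define \<phi> where "\<phi> = Arg (Complex a b)"
  define L where "L = cmod (Complex a b)"
  have "Complex a b = rcis L \<phi>"
    unfolding L_def \<phi>_def by (rule rcis_cmod_Arg[symmetric])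
  then have ab: "a = L * cos \<phi>" "b = L * sin \<phi>"
    by (simp_all add: complex_eq_iff)
  have "a * cos \<phi> + b * sin \<phi> = L"
    unfolding ab by (simp add: mult.assoc flip: distrib_left)
  also have "L = sqrt (a\<^sup>2 + b\<^sup>2)"
    by (simp add: L_def complex_norm)
  finally have "a * cos \<phi> + b * sin \<phi> = sqrt (a\<^sup>2 + b\<^sup>2)" .
  then have "sqrt (a\<^sup>2 + b\<^sup>2) \<le> largest_eig A - least_eig A"
    using rotated[of "\<phi> / 2"] by simp
  then show ?thesis by (simp add: a_def b_def power_mult_distrib)
qed

lemma inner_const_on_sets:
  "(\<chi> i. if i \<in> X then \<alpha> else 0) \<bullet> (\<chi> i. if i \<in> Y then \<beta> else (0::real))
     = \<alpha> * \<beta> * card (X \<inter> Y)"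
  by (simp add: inner_vec_def if_distrib if_distribR sum.If_cases Int_commute)

lemma quadratic_form_const_on_sets:
  fixes A :: "real^'n^'n"
  shows "(\<chi> i. if i \<in> X then \<alpha> else 0) \<bullet> (A *v (\<chi> j. if j \<in> Y then \<beta> else 0))
     = \<alpha> * \<beta> * (\<Sum>i\<in>X. \<Sum>j\<in>Y. A$i$j)"
proof -
  have "(\<chi> i. if i \<in> X then \<alpha> else 0) \<bullet> (A *v (\<chi> j. if j \<in> Y then \<beta> else 0))
     = (\<Sum>i\<in>X. \<alpha> * (\<Sum>j\<in>Y. A$i$j * \<beta>))"
    by (simp add: inner_vec_def matrix_vector_mult_def if_distrib if_distribR sum.If_cases Int_commute)
  then show ?thesis
    by (simp add: sum_distrib_left sum_distrib_right mult_ac)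
qed

lemma spread_ge_two_blocks:
  fixes A :: "real^'n^'n" and X :: "'n set"
  assumes sym: "transpose A = A" and "X \<noteq> {}" "X \<noteq> UNIV"
  defines "N \<equiv> real (card X)" and "M \<equiv> real (card (- X))"
    and "P \<equiv> \<Sum>i\<in>X. \<Sum>j\<in>X. A$i$j" and "Q \<equiv> \<Sum>i\<in>-X. \<Sum>j\<in>-X. A$i$j"
    and "T \<equiv> \<Sum>i\<in>X. \<Sum>j\<in>-X. A$i$j"
  shows "sqrt ((P / N - Q / M)\<^sup>2 + 4 * T\<^sup>2 / (N * M)) \<le> largest_eig A - least_eig A"
proof -
  have N: "N > 0" and M: "M > 0"
    using assms(2,3) by (auto simp: N_def M_def card_gt_0_iff)
  define u where "u = (\<chi> i. if i \<in> X then 1 / sqrt N else (0::real))"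
  define w where "w = (\<chi> i. if i \<in> - X then 1 / sqrt M else (0::real))"
  have "u \<bullet> u = 1" "w \<bullet> w = 1" "u \<bullet> w = 0"
    unfolding u_def w_def inner_const_on_sets using N M by (simp_all add: N_def M_def card_gt_0_iff)
  then have "sqrt ((u \<bullet> (A *v u) - w \<bullet> (A *v w))\<^sup>2 + 4 * (u \<bullet> (A *v w))\<^sup>2)
      \<le> largest_eig A - least_eig A"
    by (rule spread_ge_orthonormal_pair[OF sym])
  moreover have "u \<bullet> (A *v u) = P / N" "w \<bullet> (A *v w) = Q / M" "(u \<bullet> (A *v w))\<^sup>2 = T\<^sup>2 / (N * M)"
    unfolding u_def w_def quadratic_form_const_on_sets P_def[symmetric] Q_def[symmetric] T_def[symmetric]
    using N M by (simp_all add: power_divide power_mult_distrib)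
  ultimately show ?thesis by simp
qed

lemma sqrt_two_block_bound_eq:
  fixes N M P Q T :: real
  assumes "N > 0" "M > 0"
  shows "sqrt ((P / N - Q / M)\<^sup>2 + 4 * T\<^sup>2 / (N * M))
    = sqrt ((N * Q + M * P)\<^sup>2 + 4 * (T\<^sup>2 - P * Q) * N * M) / (N * M)"
proof -
  have "(P / N - Q / M)\<^sup>2 + 4 * T\<^sup>2 / (N * M)
      = ((N * Q + M * P)\<^sup>2 + 4 * (T\<^sup>2 - P * Q) * N * M) / (N * M)\<^sup>2"
    using assms by (simp add: field_simps power2_eq_square)
  then show ?thesis
    using assms by (simp add: real_sqrt_divide)
qed

lemma relpowp_symmetric:
  assumes "\<And>u v. E u v \<Longrightarrow> E v u" and "(E ^^ k) u v"
  shows "(E ^^ k) v u"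
  using assms(2)
proof (induction k arbitrary: v)
  case 0
  then show ?case by simp
next
  case (Suc k)
  then obtain y where "(E ^^ k) u y" "E y v" by auto
  then show ?case using Suc.IH assms(1) by (meson relpowp_Suc_I2)
qed

lemma gdist_commute:
  assumes "simple_graph E"
  shows "gdist E u v = gdist E v u"
proof -
  have "(E ^^ k) u v \<longleftrightarrow> (E ^^ k) v u" for k
    using assms relpowp_symmetric[of E] unfolding simple_graph_def by metis
  then show ?thesis unfolding gdist_def by simp
qed

lemma gdist_self [simp]: "gdist E v v = 0"
  unfolding gdist_def by (simp add: Least_eq_0)

lemma gdist_adjacent:
  assumes "simple_graph E" "E v w"
  shows "gdist E v w = 1"
  unfolding gdist_def
proof (rule Least_equality)
  show "(E ^^ 1) v w" using assms by (simp add: relcompp_apply)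
  fix k assume "(E ^^ k) v w"
  moreover have "v \<noteq> w" using assms by (auto simp: simple_graph_def)
  ultimately show "1 \<le> k" by (cases k) auto
qed

lemma gdist_common_neighbour:
  assumes "simple_graph E" "bipartite_graph E" "E v w" "E v w'" "w \<noteq> w'"
  shows "gdist E w w' = 2"
  unfolding gdist_def
proof (rule Least_equality)
  have "E w v" using assms by (simp add: simple_graph_def)
  then show "(E ^^ 2) w w'"
    using assms(4) by (auto simp: numeral_2_eq_2 relcompp_apply)
  fix k assume k: "(E ^^ k) w w'"
  obtain c :: "'a \<Rightarrow> bool" where "\<And>u v. E u v \<Longrightarrow> c u \<noteq> c v"
    using assms(2) unfolding bipartite_graph_def by blast
  then have "\<not> E w w'" using assms(3,4) by metis
  then show "2 \<le> k" using k assms(5)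
    by (cases k; cases "k - 1") (auto simp: numeral_2_eq_2)
qed

lemma sum_gdist_neighbours:
  fixes E :: "'a::finite \<Rightarrow> 'a \<Rightarrow> bool"
  assumes "simple_graph E" "bipartite_graph E" "E v i"
  shows "(\<Sum>j\<in>{w. E v w}. real (gdist E i j)) = 2 * (real (gdeg E v) - 1)"
proof -
  let ?Nb = "{w. E v w}"
  have i: "i \<in> ?Nb" using assms(3) by simp
  have "(\<Sum>j\<in>?Nb. real (gdist E i j)) = (\<Sum>j\<in>?Nb - {i}. real (gdist E i j))"
    using i by (simp add: sum.remove)
  also have "\<dots> = (\<Sum>j\<in>?Nb - {i}. 2)"
    using gdist_common_neighbour[OF assms(1,2,3)] by (intro sum.cong) auto
  also have "\<dots> = 2 * (real (gdeg E v) - 1)"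
  proof -
    have "card ?Nb \<ge> 1" using i by (auto simp: Suc_le_eq card_gt_0_iff)
    then show ?thesis using i by (simp add: gdeg_def of_nat_diff)
  qed
  finally show ?thesis .
qed

lemma sum_gdist_closed_neighbourhood:
  fixes E :: "'a::finite \<Rightarrow> 'a \<Rightarrow> bool" and v :: 'a
  assumes "simple_graph E" "bipartite_graph E"
  defines "X \<equiv> insert v {w. E v w}"
  shows "(\<Sum>i\<in>X. \<Sum>j\<in>X. real (gdist E i j)) = 2 * (real (gdeg E v))\<^sup>2"
proof -
  let ?Nb = "{w. E v w}" and ?d = "real (gdeg E v)"
  have v: "v \<notin> ?Nb" using assms(1) by (simp add: simple_graph_def)
  have row_v: "(\<Sum>j\<in>X. real (gdist E v j)) = ?d"
    using v gdist_adjacent[OF assms(1)] by (simp add: X_def gdeg_def)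
  have row_nb: "(\<Sum>j\<in>X. real (gdist E i j)) = 2 * ?d - 1" if "i \<in> ?Nb" for i
    using that v gdist_adjacent[OF assms(1)] gdist_commute[OF assms(1), of i v]
      sum_gdist_neighbours[OF assms(1,2), of v i]
    by (simp add: X_def)
  have "(\<Sum>i\<in>X. \<Sum>j\<in>X. real (gdist E i j)) = ?d + (\<Sum>i\<in>?Nb. 2 * ?d - 1)"
    using v row_v row_nb by (simp add: X_def)
  also have "\<dots> = 2 * ?d\<^sup>2"
    by (simp add: gdeg_def power2_eq_square algebra_simps)
  finally show ?thesis .
qed

lemma sum_transmission_closed_neighbourhood:
  assumes "simple_graph E"
  shows "(\<Sum>i\<in>insert v {w. E v w}. transmission E i)
    = transmission E v + avg_nbr_trans E v * real (gdeg E v)"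
proof -
  have "v \<notin> {w. E v w}" using assms by (simp add: simple_graph_def)
  moreover have "(\<Sum>w\<in>{w. E v w}. transmission E w) = avg_nbr_trans E v * real (gdeg E v)"
    by (cases "gdeg E v = 0") (auto simp: avg_nbr_trans_def gdeg_def)
  ultimately show ?thesis by simp
qed

lemma transpose_dist_matrix:
  assumes "simple_graph E"
  shows "transpose (dist_matrix E) = dist_matrix E"
  using gdist_commute[OF assms] by (simp add: transpose_def dist_matrix_def vec_eq_iff)

lemma sum_split_Compl:
  fixes f :: "'a::finite \<Rightarrow> 'b::comm_monoid_add"
  shows "sum f UNIV = sum f X + sum f (- X)"
  using sum.subset_diff[of X UNIV f] by (simp add: Compl_eq_Diff_UNIV add.commute)

lemma transmission_block_sums:
  fixes E :: "'a::finite \<Rightarrow> 'a \<Rightarrow> bool" and X :: "'a set"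
  assumes "simple_graph E"
  defines "P \<equiv> \<Sum>i\<in>X. \<Sum>j\<in>X. real (gdist E i j)" and "Q \<equiv> \<Sum>i\<in>-X. \<Sum>j\<in>-X. real (gdist E i j)"
    and "T \<equiv> \<Sum>i\<in>X. \<Sum>j\<in>-X. real (gdist E i j)"
  shows "(\<Sum>i\<in>X. transmission E i) = P + T"
    and "(\<Sum>u\<in>UNIV. transmission E u) = P + 2 * T + Q"
proof -
  have row: "transmission E i = (\<Sum>j\<in>X. real (gdist E i j)) + (\<Sum>j\<in>-X. real (gdist E i j))" for i
    unfolding transmission_def by (rule sum_split_Compl)
  show X: "(\<Sum>i\<in>X. transmission E i) = P + T"
    unfolding row P_def T_def by (simp add: sum.distrib)
  have "(\<Sum>i\<in>-X. \<Sum>j\<in>X. real (gdist E i j)) = T"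
    unfolding T_def by (subst sum.swap) (simp add: gdist_commute[OF assms(1)])
  then have "(\<Sum>i\<in>-X. transmission E i) = T + Q"
    unfolding row Q_def by (simp add: sum.distrib)
  then show "(\<Sum>u\<in>UNIV. transmission E u) = P + 2 * T + Q"
    using sum_split_Compl[of "transmission E" X] X by simp
qed

lemma distance_spread_ge_vertex_bound:
  fixes E :: "'a::finite \<Rightarrow> 'a \<Rightarrow> bool" and v :: 'a
  assumes simple: "simple_graph E" and bip: "bipartite_graph E" and deg: "gdeg E v + 2 \<le> CARD('a)"
  defines "n \<equiv> real CARD('a)" and "\<Delta> \<equiv> real (gdeg E v)"
    and "S \<equiv> \<Sum>u\<in>UNIV. transmission E u"
    and "D \<equiv> transmission E v" and "t \<equiv> avg_nbr_trans E v"
  shows "sqrt (((\<Delta> + 1) * (S - 2 * D - 2 * t * \<Delta>) + 2 * n * \<Delta>\<^sup>2)\<^sup>2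
      + 4 * (D\<^sup>2 - 2 * S * \<Delta>\<^sup>2 + 2 * D * t * \<Delta> + t\<^sup>2 * \<Delta>\<^sup>2) * (1 + \<Delta>) * (n - \<Delta> - 1))
    / ((1 + \<Delta>) * (n - \<Delta> - 1)) \<le> distance_spread E"
proof -
  define X where "X = insert v {w. E v w}"
  define N where "N = real (card X)"
  define M where "M = real (card (- X))"
  define P where "P = (\<Sum>i\<in>X. \<Sum>j\<in>X. real (gdist E i j))"
  define Q where "Q = (\<Sum>i\<in>-X. \<Sum>j\<in>-X. real (gdist E i j))"
  define T where "T = (\<Sum>i\<in>X. \<Sum>j\<in>-X. real (gdist E i j))"
  have "v \<notin> {w. E v w}" using simple by (simp add: simple_graph_def)
  then have card_X: "card X = gdeg E v + 1" by (simp add: X_def gdeg_def)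
  moreover have "card (- X) = CARD('a) - card X"
    by (simp add: Compl_eq_Diff_UNIV card_Diff_subset)
  ultimately have N: "N = 1 + \<Delta>" and M: "M = n - \<Delta> - 1"
    using deg by (simp_all add: N_def M_def \<Delta>_def n_def of_nat_diff)
  have "X \<noteq> {}" "X \<noteq> UNIV"
    using card_X deg by (auto simp: X_def)
  then have "sqrt ((P / N - Q / M)\<^sup>2 + 4 * T\<^sup>2 / (N * M)) \<le> distance_spread E"
    using spread_ge_two_blocks[OF transpose_dist_matrix[OF simple]]
    by (simp add: distance_spread_def dist_matrix_def N_def M_def P_def Q_def T_def)
  moreover have "N > 0" "M > 0" using deg by (simp_all add: N M \<Delta>_def n_def)
  ultimately have bound: "sqrt ((N * Q + M * P)\<^sup>2 + 4 * (T\<^sup>2 - P * Q) * N * M) / (N * M)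
      \<le> distance_spread E"
    by (simp add: sqrt_two_block_bound_eq)
  note blocks = transmission_block_sums[OF simple, of X, folded P_def Q_def T_def]
  have P: "P = 2 * \<Delta>\<^sup>2"
    unfolding P_def X_def \<Delta>_def by (rule sum_gdist_closed_neighbourhood[OF simple bip])
  have S: "S = P + 2 * T + Q" unfolding S_def by (rule blocks(2))
  have Z: "D + t * \<Delta> = P + T"
    using sum_transmission_closed_neighbourhood[OF simple, of v] blocks(1)
    by (simp add: X_def D_def t_def \<Delta>_def)
  have SZ: "S - 2 * D - 2 * t * \<Delta> = Q - P" using S Z by linarith
  have "(\<Delta> + 1) * (S - 2 * D - 2 * t * \<Delta>) + 2 * n * \<Delta>\<^sup>2 = N * Q + M * P"
    unfolding SZ N M P by (simp add: algebra_simps)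
  moreover have "D\<^sup>2 - 2 * S * \<Delta>\<^sup>2 + 2 * D * t * \<Delta> + t\<^sup>2 * \<Delta>\<^sup>2 = (D + t * \<Delta>)\<^sup>2 - S * P"
    unfolding P by (simp add: power2_eq_square algebra_simps)
  then have "D\<^sup>2 - 2 * S * \<Delta>\<^sup>2 + 2 * D * t * \<Delta> + t\<^sup>2 * \<Delta>\<^sup>2 = T\<^sup>2 - P * Q"
    unfolding Z S by (simp add: power2_eq_square algebra_simps)
  ultimately show ?thesis
    using bound by (simp add: N M mult.assoc)
qed

theorem theorem3p2:
  fixes E :: "'a::finite \<Rightarrow> 'a \<Rightarrow> bool" and K :: "'a set"
  assumes "simple_graph E" and "connected_graph E" and "bipartite_graph E"
    and "K \<noteq> {}"
    and "\<forall>v\<in>K. gdeg E v = max_deg E"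
    and "int (max_deg E) \<le> int CARD('a) - 2"
  shows "distance_spread E \<ge>
    (let n = real CARD('a); \<Delta> = real (max_deg E);
         S = (\<Sum>v\<in>UNIV. transmission E v);
         a = (\<lambda>v. (\<Delta> + 1) * (S - 2 * transmission E v - 2 * avg_nbr_trans E v * \<Delta>)
                   + 2 * n * \<Delta>\<^sup>2);
         b = (\<lambda>v. (transmission E v)\<^sup>2 - 2 * S * \<Delta>\<^sup>2 + 2 * transmission E v * avg_nbr_trans E v * \<Delta>
                   + (avg_nbr_trans E v)\<^sup>2 * \<Delta>\<^sup>2)
     in Max ((\<lambda>v. sqrt ((a v)\<^sup>2 + 4 * b v * (1 + \<Delta>) * (n - \<Delta> - 1))
                  / ((1 + \<Delta>) * (n - \<Delta> - 1))) ` K))"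
proof -
  have "gdeg E v + 2 \<le> CARD('a)" "gdeg E v = max_deg E" if "v \<in> K" for v
    using that assms(5,6) by simp_all
  then show ?thesis
    unfolding Let_def using assms(4) distance_spread_ge_vertex_bound[OF assms(1,3)]
    by (simp add: Max_le_iff) metis
qed

end
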